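(* Let $G=(V,E)$ be a finite connected graph with girth at least $9$ and minimum degree $\delta\ge 3$, and let $G^2-E$ denote the graph on vertex set $V$ in which $u,v$ are adjacent if and only if $\mathrm{dist}_G(u,v)=2$. Then $\mathrm{cc}(G^2-E)\ge \min\{2\delta,\gamma(G^2-E)\}$.
   Context: All graphs are finite and reflexive (a loop at every vertex; moving along a loop means passing); loops are ignored for girth, degrees and distances. $\gamma$ denotes domination number. $G^2$ is the square of $G$ (adding edges between vertices at distance $2$), so $G^2-E$ has exactly the edges joining vertices at distance $2$ in $G$. Cops and Attacking Robbers: the cop player places $k$ cops on vertices, then the robber chooses a vertex. In each round the cops move (each cop moves to an adjacent vertex or passes), then the robber moves (to an adjacent vertex or passes). The cops win if after finitely many moves a cop moves onto the robber's vertex. Additionally, if the robber moves onto a vertex occupied by a cop, exactly one cop on that vertex is removed from the game; the robber's initial placement on a cop's vertex does not count as an attack. Both players play optimally. The attacking cop number $\mathrm{cc}(G)$ is the least $k$ such that $k$ cops can guarantee a win. *)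

theory Defs
  imports Main
begin

text \<open>A finite simple graph: vertex set V, symmetric irreflexive edge relation E on V.
  Loops (reflexivity) are not part of E; they are modelled in the game by allowing passing.\<close>
definition graph :: "'a set \<Rightarrow> ('a \<Rightarrow> 'a \<Rightarrow> bool) \<Rightarrow> bool" where
  "graph V E \<longleftrightarrow> finite V \<and> (\<forall>u v. E u v \<longrightarrow> u \<in> V \<and> v \<in> V)
      \<and> (\<forall>u v. E u v \<longrightarrow> E v u) \<and> (\<forall>u. \<not> E u u)"

definition walk :: "('a \<Rightarrow> 'a \<Rightarrow> bool) \<Rightarrow> 'a list \<Rightarrow> bool" where
  "walk E xs \<longleftrightarrow> xs \<noteq> [] \<and> successively E xs"

definition connected_graph :: "'a set \<Rightarrow> ('a \<Rightarrow> 'a \<Rightarrow> bool) \<Rightarrow> bool" where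
  "connected_graph V E \<longleftrightarrow>
     (\<forall>u\<in>V. \<forall>v\<in>V. \<exists>xs. walk E xs \<and> hd xs = u \<and> last xs = v)"

definition dist :: "('a \<Rightarrow> 'a \<Rightarrow> bool) \<Rightarrow> 'a \<Rightarrow> 'a \<Rightarrow> nat" where
  "dist E u v = (LEAST n. \<exists>xs. walk E xs \<and> hd xs = u \<and> last xs = v \<and> length xs = Suc n)"

definition is_cycle :: "('a \<Rightarrow> 'a \<Rightarrow> bool) \<Rightarrow> 'a list \<Rightarrow> bool" where
  "is_cycle E xs \<longleftrightarrow> length xs \<ge> 3 \<and> distinct xs \<and> walk E xs \<and> E (last xs) (hd xs)"

text \<open>girth at least g: every cycle has length at least g (vacuous for forests, girth = infinity).\<close>
definition girth_at_least :: "('a \<Rightarrow> 'a \<Rightarrow> bool) \<Rightarrow> nat \<Rightarrow> bool" where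
  "girth_at_least E g \<longleftrightarrow> (\<forall>xs. is_cycle E xs \<longrightarrow> length xs \<ge> g)"

definition degree :: "'a set \<Rightarrow> ('a \<Rightarrow> 'a \<Rightarrow> bool) \<Rightarrow> 'a \<Rightarrow> nat" where
  "degree V E v = card {w \<in> V. E v w}"

definition min_degree :: "'a set \<Rightarrow> ('a \<Rightarrow> 'a \<Rightarrow> bool) \<Rightarrow> nat" where
  "min_degree V E = Min (degree V E ` V)"

definition dominating :: "'a set \<Rightarrow> ('a \<Rightarrow> 'a \<Rightarrow> bool) \<Rightarrow> 'a set \<Rightarrow> bool" where
  "dominating V E D \<longleftrightarrow> D \<subseteq> V \<and> (\<forall>v\<in>V. v \<in> D \<or> (\<exists>u\<in>D. E u v))"

definition domination_number :: "'a set \<Rightarrow> ('a \<Rightarrow> 'a \<Rightarrow> bool) \<Rightarrow> nat" where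
  "domination_number V E = Min {card D | D. dominating V E D}"

definition sq_minus :: "'a set \<Rightarrow> ('a \<Rightarrow> 'a \<Rightarrow> bool) \<Rightarrow> 'a \<Rightarrow> 'a \<Rightarrow> bool" where
  "sq_minus V E u v \<longleftrightarrow> u \<in> V \<and> v \<in> V \<and> dist E u v = 2"

text \<open>The positions of the remaining cops form a list cs
  (cops are individual tokens); the robber is at r; it is the cops' turn.
  copwin E cs r: the cops can force a capture in finitely many moves (least fixed point).\<close>
inductive copwin :: "('a \<Rightarrow> 'a \<Rightarrow> bool) \<Rightarrow> 'a list \<Rightarrow> 'a \<Rightarrow> bool" for E where
  "list_all2 (\<lambda>x y. y = x \<or> E x y) cs cs' \<Longrightarrow>
   (r \<in> set cs' \<or> (\<forall>r'. (r' = r \<or> E r r') \<longrightarrow> copwin E (remove1 r' cs') r'))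
   \<Longrightarrow> copwin E cs r"

definition cops_win :: "'a set \<Rightarrow> ('a \<Rightarrow> 'a \<Rightarrow> bool) \<Rightarrow> nat \<Rightarrow> bool" where
  "cops_win V E k \<longleftrightarrow> (\<exists>cs. length cs = k \<and> set cs \<subseteq> V \<and> (\<forall>r\<in>V. copwin E cs r))"

definition attacking_cop_number :: "'a set \<Rightarrow> ('a \<Rightarrow> 'a \<Rightarrow> bool) \<Rightarrow> nat" where
  "attacking_cop_number V E = (LEAST k. cops_win V E k)"

end

theory Submission
  imports Defs
begin

text \<open>The robber keeps to vertices that no cop guards in \<open>G\<^sup>2 - E\<close>; fewer than \<open>\<gamma>\<close> cops
  cannot guard every vertex, so such a start exists.  From \<open>r\<close>, consider for each neighbour
  \<open>x\<close> of \<open>r\<close> the branch of vertices reached by non-backtracking walks of length at most 4 that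
  begin with the edge \<open>rx\<close>.  Girth at least 9 makes such walks unique, so the \<open>\<ge> \<delta>\<close> branches
  are disjoint and, with fewer than \<open>2\<delta>\<close> cops, one of them holds at most one cop.  The
  \<open>\<ge> 2\<close> other neighbours of its \<open>x\<close> are at distance 2 from \<open>r\<close>, and every cop guarding one of them
  lies in the branch.  So the robber either attacks the cop sitting on such a neighbour, or
  moves to one of them that the single cop (which, by uniqueness of short walks, guards at
  most one) leaves unguarded.\<close>

fun non_backtracking :: "'a list \<Rightarrow> bool" where
  "non_backtracking (a # b # c # xs) \<longleftrightarrow> a \<noteq> c \<and> non_backtracking (b # c # xs)"
| "non_backtracking _ \<longleftrightarrow> True"

lemma non_backtracking_ConsD: "non_backtracking (a # xs) \<Longrightarrow> non_backtracking xs"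
  by (cases xs rule: non_backtracking.cases) auto

lemma non_backtracking_appendD1: "non_backtracking (xs @ ys) \<Longrightarrow> non_backtracking xs"
  by (induction xs rule: non_backtracking.induct) auto

lemma non_backtracking_appendD2: "non_backtracking (xs @ ys) \<Longrightarrow> non_backtracking ys"
  by (induction xs) (auto dest: non_backtracking_ConsD)

lemma non_backtracking_snoc3:
  "non_backtracking (xs @ [a, b, c]) \<longleftrightarrow> non_backtracking (xs @ [a, b]) \<and> a \<noteq> c"
  by (induction xs rule: non_backtracking.induct) auto

lemma non_backtracking_rev: "non_backtracking xs \<Longrightarrow> non_backtracking (rev xs)"
proof (induction xs rule: non_backtracking.induct)
  case (1 a b c xs)
  then show ?case using non_backtracking_snoc3[of "rev xs" c b a] by auto
qed auto

lemma non_backtracking_append_Cons: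
  assumes "non_backtracking (xs @ [a])" and "non_backtracking (a # ys)"
    and "xs \<noteq> [] \<Longrightarrow> ys \<noteq> [] \<Longrightarrow> last xs \<noteq> hd ys"
  shows "non_backtracking (xs @ a # ys)"
  using assms
proof (induction xs rule: non_backtracking.induct)
  case (1 p q s xs)
  then show ?case by (auto dest: non_backtracking_ConsD)
next
  case ("2_2" p)
  then show ?case by (cases ys) auto
next
  case ("2_3" p q)
  then show ?case by (cases ys) auto
qed simp

lemma closed_non_backtracking_walk_contains_shorter_cycle:
  assumes irrefl: "\<And>u. \<not> E u u"
  shows "successively E W \<Longrightarrow> non_backtracking W \<Longrightarrow> 2 \<le> length W \<Longrightarrow> hd W = last W
     \<Longrightarrow> \<exists>C. is_cycle E C \<and> length C < length W"
proof (induction "length W" arbitrary: W rule: less_induct)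
  case less
  define B where "B = butlast W"
  have W: "W = B @ [last W]"
    using less.prems(3) unfolding B_def by (metis append_butlast_last_id list.size(3) not_numeral_le_zero)
  have "B \<noteq> []" using less.prems(3) unfolding B_def by (cases W rule: rev_cases) auto
  have W_closed: "W = B @ [hd B]" using W less.prems(4) \<open>B \<noteq> []\<close> by (metis hd_append2)
  have B_walk: "successively E B" and B_closing: "E (last B) (hd B)"
    using less.prems(1) W_closed \<open>B \<noteq> []\<close> successively_append_iff[of E B "[hd B]"] by auto
  show ?case
  proof (cases "distinct B")
    case True
    have "length B \<ge> 3"
    proof (rule ccontr)
      assume "\<not> length B \<ge> 3"
      with \<open>B \<noteq> []\<close> consider a where "B = [a]" | a b where "B = [a, b]"
        by (cases B rule: non_backtracking.cases) auto
      then show False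
        using B_closing irrefl less.prems(2) W_closed by cases auto
    qed
    then have "is_cycle E B" unfolding is_cycle_def walk_def using True B_walk B_closing by auto
    then show ?thesis using W by (metis length_append_singleton lessI)
  next
    case False
    then obtain xs y ys zs where B_split: "B = xs @ [y] @ ys @ [y] @ zs"
      using not_distinct_decomp by blast
    define S where "S = y # ys @ [y]"
    have W_split: "W = xs @ S @ (zs @ [last W])" using W B_split S_def by simp
    have "successively E S" using less.prems(1) W_split by (metis successively_append_iff)
    moreover have "non_backtracking S"
      using less.prems(2) W_split non_backtracking_appendD1 non_backtracking_appendD2 by metis
    moreover have "length S < length W" using arg_cong[OF W_split, of length] by simp
    ultimately show ?thesis using less.hyps[of S] unfolding S_def by fastforce
  qed
qed

lemma no_short_closed_non_backtracking_walk:
  assumes "\<And>u. \<not> E u u" and "girth_at_least E g"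
    and "successively E W" and "non_backtracking W" and "2 \<le> length W" and "length W \<le> g"
    and "hd W = last W"
  shows False
  using closed_non_backtracking_walk_contains_shorter_cycle[of E W] assms
  unfolding girth_at_least_def by fastforce

lemma short_non_backtracking_walks_unique:
  assumes irrefl: "\<And>u. \<not> E u u" and sym: "\<And>u v. E u v \<Longrightarrow> E v u" and girth: "girth_at_least E g"
  shows "successively E P \<Longrightarrow> successively E Q \<Longrightarrow> non_backtracking P \<Longrightarrow> non_backtracking Q
    \<Longrightarrow> P \<noteq> [] \<Longrightarrow> Q \<noteq> [] \<Longrightarrow> hd P = hd Q \<Longrightarrow> last P = last Q \<Longrightarrow> length P + length Q \<le> g + 1
    \<Longrightarrow> P = Q"
proof (induction P arbitrary: Q)
  case (Cons v P')
  obtain Q' where Q: "Q = v # Q'" using Cons.prems(6,7) by (cases Q) auto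
  show ?case
  proof (cases "P' \<noteq> [] \<and> Q' \<noteq> [] \<and> hd P' = hd Q'")
    case True
    then have "P' = Q'"
      using Cons.IH[of Q'] Cons.prems Q by (auto simp: successively_Cons dest: non_backtracking_ConsD)
    then show ?thesis using Q by simp
  next
    case False
    show ?thesis
    proof (rule ccontr)
      assume "v # P' \<noteq> Q"
      then have nontrivial: "P' \<noteq> [] \<or> Q' \<noteq> []" using Q by auto
      \<comment> \<open>Walking back along P and then out along Q closes a short non-backtracking walk.\<close>
      define W where "W = rev P' @ v # Q'"
      have "(\<lambda>x y. E y x) = E" using sym by blast
      then have "successively E (rev (v # P'))"
        using Cons.prems(1) by (simp only: successively_rev)
      then have "successively E W"
        using Cons.prems(2) Q unfolding W_def by (auto simp: successively_append_iff)
      moreover have "non_backtracking W"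
      proof -
        have "non_backtracking (rev P' @ [v])"
          using non_backtracking_rev[OF Cons.prems(3)] by simp
        moreover have "non_backtracking (v # Q')" using Cons.prems(4) Q by simp
        moreover have "last (rev P') \<noteq> hd Q'" if "P' \<noteq> []" "Q' \<noteq> []"
          using False that by (simp add: last_rev)
        ultimately show ?thesis unfolding W_def by (rule non_backtracking_append_Cons) simp_all
      qed
      moreover have "hd W = last W"
        using Cons.prems(8) Q unfolding W_def
        by (cases "P' = []"; cases "Q' = []") (simp_all add: hd_append hd_rev)
      moreover have "2 \<le> length W" "length W \<le> g"
        using Cons.prems(9) Q nontrivial unfolding W_def by (auto simp: Suc_le_eq)
      ultimately show False
        using no_short_closed_non_backtracking_walk[OF irrefl girth] by blast
    qed
  qed
qed simp

lemma dist_eq_2_iff: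
  assumes "\<exists>xs. walk E xs \<and> hd xs = u \<and> last xs = v"
  shows "dist E u v = 2 \<longleftrightarrow> u \<noteq> v \<and> \<not> E u v \<and> (\<exists>w. E u w \<and> E w v)"
proof -
  define P where "P n \<longleftrightarrow> (\<exists>xs. walk E xs \<and> hd xs = u \<and> last xs = v \<and> length xs = Suc n)" for n
  have P0: "P 0 \<longleftrightarrow> u = v"
    unfolding P_def walk_def by (auto simp: length_Suc_conv intro!: exI[of _ "[u]"])
  have P1: "P 1 \<longleftrightarrow> E u v"
    unfolding P_def walk_def by (auto simp: length_Suc_conv intro!: exI[of _ "[u, v]"])
  have P2: "P 2 \<longleftrightarrow> (\<exists>w. E u w \<and> E w v)"
  proof
    assume "\<exists>w. E u w \<and> E w v"
    then obtain w where "E u w" "E w v" by blast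
    then show "P 2" unfolding P_def walk_def by (intro exI[of _ "[u, w, v]"]) simp
  qed (auto simp: P_def walk_def length_Suc_conv numeral_2_eq_2)
  have "\<exists>n. P n"
    using assms unfolding P_def walk_def by (metis Suc_pred length_greater_0_conv)
  have "(LEAST n. P n) = 2 \<longleftrightarrow> P 2 \<and> \<not> P 0 \<and> \<not> P 1"
  proof
    assume "(LEAST n. P n) = 2"
    then show "P 2 \<and> \<not> P 0 \<and> \<not> P 1"
      using LeastI_ex[OF \<open>\<exists>n. P n\<close>] not_less_Least[of 0 P] not_less_Least[of 1 P] by auto
  next
    assume P: "P 2 \<and> \<not> P 0 \<and> \<not> P 1"
    show "(LEAST n. P n) = 2"
    proof (rule Least_equality)
      fix m assume "P m"
      then have "m \<noteq> 0" "m \<noteq> 1" using P by (metis, metis)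
      then show "2 \<le> m" by linarith
    qed (use P in simp)
  qed
  then show ?thesis unfolding dist_def P_def[symmetric] using P0 P1 P2 by auto
qed

lemma sum_length_filter_le_length:
  assumes "finite X"
    and disjoint: "\<And>c x x'. x \<in> X \<Longrightarrow> x' \<in> X \<Longrightarrow> P x c \<Longrightarrow> P x' c \<Longrightarrow> x = x'"
  shows "(\<Sum>x\<in>X. length (filter (P x) cs)) \<le> length cs"
proof (induction cs)
  case (Cons c cs)
  have "card {x\<in>X. P x c} \<le> 1"
    using card_le_Suc0_iff_eq[of "{x\<in>X. P x c}"] assms by auto
  then have "(\<Sum>x\<in>X. if P x c then 1 else 0 :: nat) \<le> 1"
    using sum.inter_filter[OF \<open>finite X\<close>, of "\<lambda>_. 1::nat" "\<lambda>x. P x c"] by simp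
  moreover have "(\<Sum>x\<in>X. length (filter (P x) (c # cs)))
      = (\<Sum>x\<in>X. if P x c then 1 else 0) + (\<Sum>x\<in>X. length (filter (P x) cs))"
    by (subst sum.distrib[symmetric]) (rule sum.cong; simp)
  ultimately show ?case using Cons.IH by simp
qed simp

lemma pigeonhole_length_filter_le_1:
  assumes "finite X"
    and "\<And>c x x'. x \<in> X \<Longrightarrow> x' \<in> X \<Longrightarrow> P x c \<Longrightarrow> P x' c \<Longrightarrow> x = x'"
    and "length cs < 2 * card X"
  shows "\<exists>x\<in>X. length (filter (P x) cs) \<le> 1"
proof (rule ccontr)
  assume "\<not> ?thesis"
  then have "(\<Sum>x\<in>X. 2) \<le> (\<Sum>x\<in>X. length (filter (P x) cs))"
    by (intro sum_mono) auto
  then show False using sum_length_filter_le_length[of X P cs] assms by simp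
qed

definition guarded :: "('a \<Rightarrow> 'a \<Rightarrow> bool) \<Rightarrow> 'a list \<Rightarrow> 'a \<Rightarrow> bool" where
  "guarded H cs v \<longleftrightarrow> (\<exists>c\<in>set cs. c = v \<or> H c v)"

lemma not_copwin_if_evasion_invariant:
  assumes evade: "\<And>cs cs' r. Inv cs r \<Longrightarrow> list_all2 (\<lambda>x y. y = x \<or> H x y) cs cs'
      \<Longrightarrow> r \<notin> set cs' \<and> (\<exists>r'. (r' = r \<or> H r r') \<and> Inv (remove1 r' cs') r')"
    and "Inv cs r"
  shows "\<not> copwin H cs r"
proof
  assume "copwin H cs r"
  then show False using \<open>Inv cs r\<close>
  proof (induction rule: copwin.induct)
    case (1 cs cs' r)
    then show ?case using evade[OF 1(3,1)] by blast
  qed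
qed

lemma unguarded_after_cop_move:
  "list_all2 (\<lambda>x y. y = x \<or> H x y) cs cs' \<Longrightarrow> \<not> guarded H cs r \<Longrightarrow> r \<notin> set cs'"
  unfolding guarded_def by (induction rule: list_all2_induct) auto

lemma cops_win_by_occupying_all_vertices:
  assumes "finite V"
  shows "\<exists>k. cops_win V H k"
proof -
  obtain cs where cs: "set cs = V" using finite_list[OF assms] by blast
  have "copwin H cs r" if "r \<in> V" for r
    using that cs by (intro copwin.intros[of H cs cs]) (auto simp: list_all2_same)
  then show ?thesis using cs unfolding cops_win_def by blast
qed

lemma domination_number_le_card:
  assumes "finite V" and "dominating V H D"
  shows "domination_number V H \<le> card D"
proof -
  have "{card D |D. dominating V H D} \<subseteq> card ` Pow V"
    unfolding dominating_def by auto
  then have "finite {card D |D. dominating V H D}"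
    using assms(1) finite_subset by blast
  then show ?thesis
    unfolding domination_number_def using assms(2) by (intro Min_le) auto
qed

definition branch :: "('a \<Rightarrow> 'a \<Rightarrow> bool) \<Rightarrow> 'a \<Rightarrow> 'a \<Rightarrow> 'a set" where
  "branch E r x = {last (x # T) |T.
     successively E (r # x # T) \<and> non_backtracking (r # x # T) \<and> length T \<le> 3}"

locale girth9_graph =
  fixes V :: "'a set" and E :: "'a \<Rightarrow> 'a \<Rightarrow> bool"
  assumes graph: "graph V E" and connected: "connected_graph V E"
    and girth: "girth_at_least E 9" and min_degree_ge_3: "3 \<le> min_degree V E"
begin

lemma finite_V: "finite V"
  using graph unfolding graph_def by simp

lemma edge_irrefl: "\<not> E u u"
  using graph unfolding graph_def by simp

lemma edge_sym: "E u v \<Longrightarrow> E v u"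
  using graph unfolding graph_def by blast

lemma edge_in_V: "E u v \<Longrightarrow> u \<in> V \<and> v \<in> V"
  using graph unfolding graph_def by blast

lemma sq_minus_iff:
  "sq_minus V E u v \<longleftrightarrow> u \<in> V \<and> v \<in> V \<and> u \<noteq> v \<and> \<not> E u v \<and> (\<exists>w. E u w \<and> E w v)"
proof (cases "u \<in> V \<and> v \<in> V")
  case True
  then have "\<exists>xs. walk E xs \<and> hd xs = u \<and> last xs = v"
    using connected unfolding connected_graph_def by blast
  with True show ?thesis unfolding sq_minus_def by (simp add: dist_eq_2_iff)
qed (auto simp: sq_minus_def)

lemma min_degree_le_card_neighbours: "v \<in> V \<Longrightarrow> min_degree V E \<le> card {w\<in>V. E v w}"
  using finite_V unfolding min_degree_def degree_def by simp

lemma non_backtracking_walks_unique: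
  "successively E P \<Longrightarrow> successively E Q \<Longrightarrow> non_backtracking P \<Longrightarrow> non_backtracking Q
    \<Longrightarrow> P \<noteq> [] \<Longrightarrow> Q \<noteq> [] \<Longrightarrow> hd P = hd Q \<Longrightarrow> last P = last Q \<Longrightarrow> length P + length Q \<le> 10
    \<Longrightarrow> P = Q"
  using short_non_backtracking_walks_unique[OF edge_irrefl edge_sym girth, of P Q] by simp

lemma branches_disjoint:
  assumes "c \<in> branch E r x" and "c \<in> branch E r x'"
  shows "x = x'"
proof -
  obtain T T' where
    "successively E (r # x # T)" "non_backtracking (r # x # T)" "c = last (x # T)" "length T \<le> 3"
    "successively E (r # x' # T')" "non_backtracking (r # x' # T')" "c = last (x' # T')" "length T' \<le> 3"
    using assms unfolding branch_def mem_Collect_eq by blast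
  then have "r # x # T = r # x' # T'"
    by (intro non_backtracking_walks_unique) auto
  then show ?thesis by simp
qed

lemma sq_minus_via_neighbour:
  assumes "E r x" and "E x y" and "y \<noteq> r"
  shows "sq_minus V E r y"
proof -
  have "\<not> E r y"
  proof
    assume "E r y"
    then have "[r, y] = [r, x, y]"
      using assms by (intro non_backtracking_walks_unique) auto
    then show False by simp
  qed
  then show ?thesis using assms edge_in_V unfolding sq_minus_iff by blast
qed

lemma guard_in_branch:
  assumes "E r x" and "E x y" and "y \<noteq> r" and "c \<noteq> r"
    and "c = y \<or> sq_minus V E c y"
  shows "c \<in> branch E r x"
proof (cases "c = y")
  case True
  then show ?thesis
    using assms unfolding branch_def by (intro CollectI exI[of _ "[y]"]) auto
next
  case False
  then obtain w where "E c w" and "E w y"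
    using assms(5) unfolding sq_minus_iff by blast
  show ?thesis
  proof (cases "w = x")
    case True
    then show ?thesis
      using assms edge_sym[OF \<open>E c w\<close>] unfolding branch_def
      by (intro CollectI exI[of _ "[c]"]) auto
  next
    case False
    then show ?thesis
      using assms \<open>c \<noteq> y\<close> edge_sym[OF \<open>E c w\<close>] edge_sym[OF \<open>E w y\<close>] unfolding branch_def
      by (intro CollectI exI[of _ "[y, w, c]"]) auto
  qed
qed

lemma guarded_neighbour_unique:
  assumes "E r x" and "\<not> E x c"
    and "E x y\<^sub>1" "y\<^sub>1 \<noteq> r" "sq_minus V E c y\<^sub>1"
    and "E x y\<^sub>2" "y\<^sub>2 \<noteq> r" "sq_minus V E c y\<^sub>2"
  shows "y\<^sub>1 = y\<^sub>2"
proof -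
  have walk: "\<exists>w. successively E [r, x, y, w, c] \<and> non_backtracking [r, x, y, w, c]"
    if y: "E x y" "y \<noteq> r" "sq_minus V E c y" for y
  proof -
    obtain w where "c \<noteq> y" "E c w" "E w y" using y(3) unfolding sq_minus_iff by blast
    moreover have "w \<noteq> x" using assms(2) edge_sym[OF \<open>E c w\<close>] by blast
    ultimately show ?thesis
      using assms(1) y(1,2) edge_sym[OF \<open>E c w\<close>] edge_sym[OF \<open>E w y\<close>]
      by (intro exI[of _ w]) simp
  qed
  obtain w\<^sub>1 where w\<^sub>1: "successively E [r, x, y\<^sub>1, w\<^sub>1, c]" "non_backtracking [r, x, y\<^sub>1, w\<^sub>1, c]"
    using walk assms(3-5) by blast
  obtain w\<^sub>2 where w\<^sub>2: "successively E [r, x, y\<^sub>2, w\<^sub>2, c]" "non_backtracking [r, x, y\<^sub>2, w\<^sub>2, c]"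
    using walk assms(6-8) by blast
  have "[r, x, y\<^sub>1, w\<^sub>1, c] = [r, x, y\<^sub>2, w\<^sub>2, c]"
    by (rule non_backtracking_walks_unique[OF w\<^sub>1(1) w\<^sub>2(1) w\<^sub>1(2) w\<^sub>2(2)]) simp_all
  then show ?thesis by simp
qed

lemma sparse_branch_exists:
  assumes "r \<in> V" and "length cs < 2 * min_degree V E"
  obtains x where "E r x" and "length (filter (\<lambda>c. c \<in> branch E r x) cs) \<le> 1"
proof -
  have "\<exists>x\<in>{x\<in>V. E r x}. length (filter (\<lambda>c. c \<in> branch E r x) cs) \<le> 1"
  proof (rule pigeonhole_length_filter_le_1)
    show "finite {x\<in>V. E r x}" using finite_V by simp
    show "length cs < 2 * card {x\<in>V. E r x}"
      using assms min_degree_le_card_neighbours by fastforce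
  qed (use branches_disjoint in blast)
  then show ?thesis using that by blast
qed

lemma two_other_neighbours:
  assumes "E r x"
  obtains y\<^sub>1 y\<^sub>2 where "E x y\<^sub>1" "y\<^sub>1 \<noteq> r" "E x y\<^sub>2" "y\<^sub>2 \<noteq> r" "y\<^sub>1 \<noteq> y\<^sub>2"
proof -
  let ?Y = "{y\<in>V. E x y} - {r}"
  have "x \<in> V" and r_in: "r \<in> {y\<in>V. E x y}"
    using edge_in_V[OF assms] edge_sym[OF assms] by auto
  then have "3 \<le> card {y\<in>V. E x y}"
    using min_degree_ge_3 min_degree_le_card_neighbours order_trans by blast
  then have "\<not> card ?Y \<le> 1"
    using r_in finite_V by (simp add: card_Diff_singleton)
  then show ?thesis
    using that card_le_Suc0_iff_eq[of ?Y] finite_V by auto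
qed

lemma neighbour_unguarded_by_branch_cops:
  assumes "E r x" and "r \<notin> set cs"
    and sparse: "length (filter (\<lambda>c. c \<in> branch E r x) cs) \<le> 1"
  obtains y where "E x y" and "y \<noteq> r"
    and "\<forall>c\<in>set (filter (\<lambda>c. c \<in> branch E r x) (remove1 y cs)). \<not> (c = y \<or> sq_minus V E c y)"
proof -
  obtain y\<^sub>1 y\<^sub>2 where y\<^sub>1: "E x y\<^sub>1" "y\<^sub>1 \<noteq> r" and y\<^sub>2: "E x y\<^sub>2" "y\<^sub>2 \<noteq> r" and "y\<^sub>1 \<noteq> y\<^sub>2"
    using two_other_neighbours[OF \<open>E r x\<close>] by blast
  show ?thesis
  proof (cases "filter (\<lambda>c. c \<in> branch E r x) cs")
    case Nil
    then show ?thesis using that[OF y\<^sub>1] by (simp add: filter_remove1)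
  next
    case (Cons c\<^sub>0 _)
    with sparse have only_c\<^sub>0: "filter (\<lambda>c. c \<in> branch E r x) cs = [c\<^sub>0]" by simp
    have "c\<^sub>0 \<in> set cs" using arg_cong[OF only_c\<^sub>0, of set] by auto
    then have "c\<^sub>0 \<noteq> r" using assms(2) by blast
    show ?thesis
    proof (cases "E x c\<^sub>0")
      case True
      then show ?thesis using that[of c\<^sub>0] only_c\<^sub>0 \<open>c\<^sub>0 \<noteq> r\<close> by (simp add: filter_remove1)
    next
      case False
      then have "c\<^sub>0 \<noteq> y\<^sub>1" "c\<^sub>0 \<noteq> y\<^sub>2" using y\<^sub>1 y\<^sub>2 by auto
      moreover have "\<not> sq_minus V E c\<^sub>0 y\<^sub>1 \<or> \<not> sq_minus V E c\<^sub>0 y\<^sub>2"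
        using guarded_neighbour_unique[OF \<open>E r x\<close> False] y\<^sub>1 y\<^sub>2 \<open>y\<^sub>1 \<noteq> y\<^sub>2\<close> by blast
      ultimately show ?thesis
        using that[OF y\<^sub>1] that[OF y\<^sub>2] only_c\<^sub>0 by (auto simp: filter_remove1)
    qed
  qed
qed

lemma robber_move:
  assumes "r \<in> V" and "r \<notin> set cs" and "length cs < 2 * min_degree V E"
  shows "\<exists>y. sq_minus V E r y \<and> \<not> guarded (sq_minus V E) (remove1 y cs) y"
proof -
  obtain x where "E r x" and "length (filter (\<lambda>c. c \<in> branch E r x) cs) \<le> 1"
    using sparse_branch_exists assms(1,3) by blast
  then obtain y where "E x y" and "y \<noteq> r"
    and "\<forall>c\<in>set (filter (\<lambda>c. c \<in> branch E r x) (remove1 y cs)). \<not> (c = y \<or> sq_minus V E c y)"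
    using neighbour_unguarded_by_branch_cops assms(2) by blast
  then have "\<not> guarded (sq_minus V E) (remove1 y cs) y"
    using guard_in_branch[OF \<open>E r x\<close>] assms(2) set_remove1_subset
    unfolding guarded_def by fastforce
  then show ?thesis using sq_minus_via_neighbour[OF \<open>E r x\<close> \<open>E x y\<close> \<open>y \<noteq> r\<close>] by blast
qed

lemma robber_evades:
  assumes "r \<in> V" and "length cs < 2 * min_degree V E" and "\<not> guarded (sq_minus V E) cs r"
  shows "\<not> copwin (sq_minus V E) cs r"
proof (rule not_copwin_if_evasion_invariant[where
    Inv = "\<lambda>cs r. r \<in> V \<and> length cs < 2 * min_degree V E \<and> \<not> guarded (sq_minus V E) cs r"])
  fix cs cs' r
  assume safe: "r \<in> V \<and> length cs < 2 * min_degree V E \<and> \<not> guarded (sq_minus V E) cs r"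
    and move: "list_all2 (\<lambda>x y. y = x \<or> sq_minus V E x y) cs cs'"
  then have "r \<notin> set cs'" and "length cs' < 2 * min_degree V E"
    using unguarded_after_cop_move list_all2_lengthD by fastforce+
  moreover obtain y where y: "sq_minus V E r y" "\<not> guarded (sq_minus V E) (remove1 y cs') y"
    using robber_move safe \<open>r \<notin> set cs'\<close> \<open>length cs' < 2 * min_degree V E\<close> by blast
  moreover have "y \<in> V" using y(1) unfolding sq_minus_def by simp
  moreover have "length (remove1 y cs') \<le> length cs'" by (simp add: length_remove1)
  ultimately show "r \<notin> set cs' \<and> (\<exists>r'. (r' = r \<or> sq_minus V E r r') \<and> r' \<in> V
      \<and> length (remove1 r' cs') < 2 * min_degree V E \<and> \<not> guarded (sq_minus V E) (remove1 r' cs') r')"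
    by (meson order_le_less_trans)
qed (use assms in blast)

lemma cops_win_imp_min_le:
  assumes "cops_win V (sq_minus V E) k"
  shows "min (2 * min_degree V E) (domination_number V (sq_minus V E)) \<le> k"
proof (rule ccontr)
  assume "\<not> ?thesis"
  then have k_lt: "k < 2 * min_degree V E" "k < domination_number V (sq_minus V E)" by auto
  obtain cs where cs: "length cs = k" "set cs \<subseteq> V" "\<forall>r\<in>V. copwin (sq_minus V E) cs r"
    using assms unfolding cops_win_def by blast
  have "\<not> dominating V (sq_minus V E) (set cs)"
    using domination_number_le_card[OF finite_V] card_length[of cs] cs(1) k_lt(2) by fastforce
  then obtain r where "r \<in> V" and "\<not> guarded (sq_minus V E) cs r"
    using cs(2) unfolding dominating_def guarded_def by blast
  then show False using robber_evades cs k_lt(1) by blast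
qed

end

theorem lemma5:
  fixes V :: "'a set" and E :: "'a \<Rightarrow> 'a \<Rightarrow> bool"
  assumes "graph V E" and "V \<noteq> {}" and "connected_graph V E"
    and "girth_at_least E 9" and "min_degree V E \<ge> 3"
  shows "attacking_cop_number V (sq_minus V E)
           \<ge> min (2 * min_degree V E) (domination_number V (sq_minus V E))"
proof -
  interpret girth9_graph V E
    using assms(1,3,4,5) by unfold_locales
  show ?thesis
    unfolding attacking_cop_number_def
    using cops_win_by_occupying_all_vertices[OF finite_V] cops_win_imp_min_le
    by (rule LeastI2_ex)
qed

end
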